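(* Let $X$ be a Cantor set with a compatible metric $d$, and let $\sigma$ be an aperiodic homeomorphism of $X$ whose minimal sets are exactly $Y_1,\dots,Y_k$ ($k<\infty$). For $i=1,\dots,k$ let $$E_i=\{x\in X:\ \text{for every }\varepsilon>0\text{ there is an }\varepsilon\text{-chain from }x\text{ to some point of }Y_i\}.$$ Then $\sigma$ is chain transitive if and only if $E_1=E_2=\dots=E_k=X$.
   Context: $\sigma$ is aperiodic if every $\sigma$-orbit is infinite. A minimal set is a nonempty closed $\sigma$-invariant set with no nonempty proper closed invariant subset. An $\varepsilon$-chain from $x$ to $y$ is a finite sequence $x_0=x,x_1,\dots,x_n=y$ with $d(\sigma(x_i),x_{i+1})<\varepsilon$ for all $i<n$. $\sigma$ is chain transitive if for all $x,y\in X$ and every $\varepsilon>0$ there is an $\varepsilon$-chain from $x$ to $y$. *)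

theory Defs
  imports "HOL-Analysis.Analysis"
begin

text \<open>Here X is a subset of a metric space, and the
  compatible metric d is the ambient metric dist restricted to X.\<close>
definition cantor_set :: "'a::metric_space set \<Rightarrow> bool" where
  "cantor_set X \<longleftrightarrow> X \<noteq> {} \<and> compact X \<and> (\<forall>x\<in>X. x islimpt X) \<and>
     (\<forall>C. C \<subseteq> X \<and> connected C \<longrightarrow> (\<exists>a. C \<subseteq> {a}))"

definition aperiodic :: "'a set \<Rightarrow> ('a \<Rightarrow> 'a) \<Rightarrow> bool" where
  "aperiodic X \<sigma> \<longleftrightarrow> (\<forall>x\<in>X. \<forall>n::nat. n > 0 \<longrightarrow> (\<sigma> ^^ n) x \<noteq> x)"

definition invariant_set :: "'a set \<Rightarrow> ('a \<Rightarrow> 'a) \<Rightarrow> 'a set \<Rightarrow> bool" where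
  "invariant_set X \<sigma> S \<longleftrightarrow> S \<subseteq> X \<and> \<sigma> ` S = S"

definition minimal_set :: "'a::topological_space set \<Rightarrow> ('a \<Rightarrow> 'a) \<Rightarrow> 'a set \<Rightarrow> bool" where
  "minimal_set X \<sigma> S \<longleftrightarrow> S \<noteq> {} \<and> closed S \<and> invariant_set X \<sigma> S \<and>
     (\<forall>T. T \<noteq> {} \<and> T \<subseteq> S \<and> closed T \<and> invariant_set X \<sigma> T \<longrightarrow> T = S)"

definition eps_chain :: "'a::metric_space set \<Rightarrow> ('a \<Rightarrow> 'a) \<Rightarrow> real \<Rightarrow> 'a \<Rightarrow> 'a \<Rightarrow> bool" where
  "eps_chain X \<sigma> \<epsilon> x y \<longleftrightarrow> (\<exists>(n::nat) (p::nat \<Rightarrow> 'a). p 0 = x \<and> p n = y \<and>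
     (\<forall>i\<le>n. p i \<in> X) \<and> (\<forall>i<n. dist (\<sigma> (p i)) (p (Suc i)) < \<epsilon>))"

definition chain_transitive :: "'a::metric_space set \<Rightarrow> ('a \<Rightarrow> 'a) \<Rightarrow> bool" where
  "chain_transitive X \<sigma> \<longleftrightarrow> (\<forall>x\<in>X. \<forall>y\<in>X. \<forall>\<epsilon>>0. eps_chain X \<sigma> \<epsilon> x y)"

definition chain_basin :: "'a::metric_space set \<Rightarrow> ('a \<Rightarrow> 'a) \<Rightarrow> 'a set \<Rightarrow> 'a set" where
  "chain_basin X \<sigma> Y = {x\<in>X. \<forall>\<epsilon>>0. \<exists>y\<in>Y. eps_chain X \<sigma> \<epsilon> x y}"

end

theory Submission
  imports Defs
begin

text \<open>The \<alpha>-limit set of a point y, i.e. the \<omega>-limit set of \<tau> = \<sigma>\<inverse>, is nonempty,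
  closed and invariant by compactness, so by Zorn's lemma it contains a minimal set; and
  every point of it reaches y by \<epsilon>-chains. Hence, if every point chains into every minimal
  set, any x chains into one inside the \<alpha>-limit set of y and from there on to y.\<close>

lemma funpow_in_invariant:
  assumes "f ` X \<subseteq> X" and "y \<in> X"
  shows "(f ^^ n) y \<in> X"
  using assms by (induction n) auto

lemma eps_chain_trans:
  assumes "eps_chain X \<sigma> e x z" and "eps_chain X \<sigma> e z y"
  shows "eps_chain X \<sigma> e x y"
proof -
  obtain n p where p: "p 0 = x" "p n = z" "\<forall>i\<le>n. p i \<in> X" "\<forall>i<n. dist (\<sigma> (p i)) (p (Suc i)) < e"
    using assms(1) unfolding eps_chain_def by blast
  obtain m q where q: "q 0 = z" "q m = y" "\<forall>i\<le>m. q i \<in> X" "\<forall>i<m. dist (\<sigma> (q i)) (q (Suc i)) < e"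
    using assms(2) unfolding eps_chain_def by blast
  define r where "r i = (if i \<le> n then p i else q (i - n))" for i
  have "r (n + m) = y" using p q by (cases m) (auto simp: r_def)
  moreover have "\<forall>i\<le>n + m. r i \<in> X"
    using p q by (auto simp: r_def)
  moreover have "dist (\<sigma> (r i)) (r (Suc i)) < e" if "i < n + m" for i
  proof (cases "i < n")
    case True
    then show ?thesis using p by (simp add: r_def)
  next
    case False
    then have "r i = q (i - n)" "r (Suc i) = q (Suc (i - n))"
      using p q by (auto simp: r_def Suc_diff_le)
    then show ?thesis using q that False by simp
  qed
  ultimately show ?thesis
    using p unfolding eps_chain_def by (metis r_def le0)
qed

lemma eps_chain_step:
  assumes "x \<in> X" and "y \<in> X" and "dist (\<sigma> x) y < e"
  shows "eps_chain X \<sigma> e x y"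
  unfolding eps_chain_def
  by (rule exI[of _ 1], rule exI[of _ "\<lambda>i. if i = 0 then x else y"]) (use assms in auto)

lemma eps_chain_funpow:
  assumes "\<sigma> ` X \<subseteq> X" and "x \<in> X" and "e > 0"
  shows "eps_chain X \<sigma> e x ((\<sigma> ^^ n) x)"
proof (induction n)
  case 0
  show ?case
    unfolding eps_chain_def by (rule exI[of _ 0], rule exI[of _ "\<lambda>_. x"]) (use assms in auto)
next
  case (Suc n)
  have "(\<sigma> ^^ n) x \<in> X"
    using assms(1,2) by (rule funpow_in_invariant)
  then have "eps_chain X \<sigma> e ((\<sigma> ^^ n) x) ((\<sigma> ^^ Suc n) x)"
    using assms by (intro eps_chain_step) auto
  with Suc.IH show ?case by (rule eps_chain_trans)
qed

definition omega_limit :: "('a::topological_space \<Rightarrow> 'a) \<Rightarrow> 'a \<Rightarrow> 'a set" where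
  "omega_limit f y = (\<Inter>N. closure ((\<lambda>n. (f ^^ n) y) ` {N..}))"

lemma closed_omega_limit: "closed (omega_limit f y)"
  unfolding omega_limit_def by auto

lemma omega_limit_subset:
  assumes "closed X" and "f ` X \<subseteq> X" and "y \<in> X"
  shows "omega_limit f y \<subseteq> X"
proof -
  have "closure ((\<lambda>n. (f ^^ n) y) ` {0..}) \<subseteq> X"
    using assms funpow_in_invariant[OF assms(2,3)] by (intro closure_minimal) auto
  then show ?thesis
    unfolding omega_limit_def by blast
qed

lemma omega_limit_nonempty:
  assumes "compact X" and "f ` X \<subseteq> X" and "y \<in> X"
  shows "omega_limit f y \<noteq> {}"
proof -
  have "X \<inter> (\<Inter>N\<in>UNIV. closure ((\<lambda>n. (f ^^ n) y) ` {N..})) \<noteq> {}"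
  proof (rule compact_imp_fip_image[OF assms(1)])
    fix I :: "nat set"
    assume "finite I"
    define M where "M = Max (insert 0 I)"
    have "(f ^^ M) y \<in> closure ((\<lambda>n. (f ^^ n) y) ` {N..})" if "N \<in> I" for N
      using \<open>finite I\<close> that unfolding M_def by (intro closure_subset[THEN subsetD]) auto
    then show "X \<inter> (\<Inter>N\<in>I. closure ((\<lambda>n. (f ^^ n) y) ` {N..})) \<noteq> {}"
      using funpow_in_invariant[OF assms(2,3)] by blast
  qed simp
  then show ?thesis
    unfolding omega_limit_def by blast
qed

lemma omega_limit_image_subset:
  assumes "closed X" and "f ` X \<subseteq> X" and "y \<in> X" and "continuous_on X g"
    and tails: "\<And>N. \<exists>M. g ` (\<lambda>n. (f ^^ n) y) ` {M..} \<subseteq> (\<lambda>n. (f ^^ n) y) ` {N..}"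
  shows "g ` omega_limit f y \<subseteq> omega_limit f y"
proof -
  have "g ` omega_limit f y \<subseteq> closure ((\<lambda>n. (f ^^ n) y) ` {N..})" for N
  proof -
    obtain M where M: "g ` (\<lambda>n. (f ^^ n) y) ` {M..} \<subseteq> (\<lambda>n. (f ^^ n) y) ` {N..}"
      using tails by blast
    have "closure ((\<lambda>n. (f ^^ n) y) ` {M..}) \<subseteq> X"
      using assms(1) funpow_in_invariant[OF assms(2,3)] by (intro closure_minimal) auto
    then have "g ` closure ((\<lambda>n. (f ^^ n) y) ` {M..}) \<subseteq> closure ((\<lambda>n. (f ^^ n) y) ` {N..})"
      using M closure_subset[of "(\<lambda>n. (f ^^ n) y) ` {N..}"]
      by (intro image_closure_subset continuous_on_subset[OF assms(4)]) auto
    then show ?thesis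
      unfolding omega_limit_def by blast
  qed
  then show ?thesis
    unfolding omega_limit_def by blast
qed

lemma invariant_set_omega_limit_inverse:
  fixes X :: "'a::t2_space set"
  assumes "compact X" and hom: "homeomorphism X X \<sigma> \<tau>" and "y \<in> X"
  shows "invariant_set X \<sigma> (omega_limit \<tau> y)"
proof -
  have X: "closed X" "\<sigma> ` X \<subseteq> X" "\<tau> ` X \<subseteq> X"
    using compact_imp_closed[OF assms(1)] hom by (auto simp: homeomorphism_def)
  have orbit: "(\<tau> ^^ n) y \<in> X" for n
    using funpow_in_invariant[OF X(3) \<open>y \<in> X\<close>] .
  have "\<sigma> ` (\<lambda>n. (\<tau> ^^ n) y) ` {Suc N..} \<subseteq> (\<lambda>n. (\<tau> ^^ n) y) ` {N..}" for N
  proof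
    fix v assume "v \<in> \<sigma> ` (\<lambda>n. (\<tau> ^^ n) y) ` {Suc N..}"
    then obtain m where "v = \<sigma> ((\<tau> ^^ m) y)" "m \<ge> Suc N"
      by auto
    then obtain n where "v = \<sigma> ((\<tau> ^^ Suc n) y)" "n \<ge> N"
      by (cases m) auto
    moreover have "\<sigma> ((\<tau> ^^ Suc n) y) = (\<tau> ^^ n) y"
      using homeomorphism_apply2[OF hom orbit] by simp
    ultimately show "v \<in> (\<lambda>n. (\<tau> ^^ n) y) ` {N..}" by auto
  qed
  then have \<sigma>_into: "\<sigma> ` omega_limit \<tau> y \<subseteq> omega_limit \<tau> y"
    using hom X \<open>y \<in> X\<close> by (intro omega_limit_image_subset) (auto simp: homeomorphism_def, blast)
  have "\<tau> ` (\<lambda>n. (\<tau> ^^ n) y) ` {N..} \<subseteq> (\<lambda>n. (\<tau> ^^ n) y) ` {N..}" for N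
    by (auto simp: image_iff intro!: bexI[of _ "Suc _"])
  then have \<tau>_into: "\<tau> ` omega_limit \<tau> y \<subseteq> omega_limit \<tau> y"
    using hom X \<open>y \<in> X\<close> by (intro omega_limit_image_subset) (auto simp: homeomorphism_def, blast)
  have sub: "omega_limit \<tau> y \<subseteq> X"
    using X(1,3) \<open>y \<in> X\<close> by (rule omega_limit_subset)
  have "omega_limit \<tau> y \<subseteq> \<sigma> ` omega_limit \<tau> y"
  proof
    fix w assume "w \<in> omega_limit \<tau> y"
    then show "w \<in> \<sigma> ` omega_limit \<tau> y"
      using \<tau>_into sub homeomorphism_apply2[OF hom] by (metis image_eqI subsetD image_subset_iff)
  qed
  then show ?thesis
    using \<sigma>_into sub unfolding invariant_set_def by blast
qed

lemma funpow_homeomorphism_cancel: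
  assumes "homeomorphism X X \<sigma> \<tau>" and "y \<in> X"
  shows "(\<sigma> ^^ n) ((\<tau> ^^ n) y) = y"
proof (induction n)
  case (Suc n)
  have "(\<tau> ^^ n) y \<in> X"
    using assms by (intro funpow_in_invariant) (auto simp: homeomorphism_def)
  have "(\<sigma> ^^ Suc n) ((\<tau> ^^ Suc n) y) = (\<sigma> ^^ n) (\<sigma> (\<tau> ((\<tau> ^^ n) y)))"
    unfolding funpow_Suc_right[of n \<sigma>] by simp
  then show ?case
    using Suc homeomorphism_apply2[OF assms(1) \<open>(\<tau> ^^ n) y \<in> X\<close>] by simp
qed simp

text \<open>A point w of the \<alpha>-limit set of y is close to some \<tau>^(n+1) y, so \<sigma> w is close to
  \<tau>^n y: one jump followed by the true \<sigma>-orbit of \<tau>^n y reaches y.\<close>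
lemma eps_chain_from_omega_limit_inverse:
  assumes hom: "homeomorphism X X \<sigma> \<tau>" and "y \<in> X" and "closed X"
    and w: "w \<in> omega_limit \<tau> y" and "e > 0"
  shows "eps_chain X \<sigma> e w y"
proof -
  have X: "\<sigma> ` X \<subseteq> X" "\<tau> ` X \<subseteq> X" "continuous_on X \<sigma>"
    using hom by (auto simp: homeomorphism_def)
  have orbit: "(\<tau> ^^ n) y \<in> X" for n
    using funpow_in_invariant[OF X(2) \<open>y \<in> X\<close>] .
  have wX: "w \<in> X"
    using omega_limit_subset[OF \<open>closed X\<close> X(2) \<open>y \<in> X\<close>] w by blast
  obtain d where d: "d > 0" "\<And>v. v \<in> X \<Longrightarrow> dist v w < d \<Longrightarrow> dist (\<sigma> v) (\<sigma> w) < e"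
    using X(3) wX \<open>e > 0\<close> unfolding continuous_on_iff by blast
  have "w \<in> closure ((\<lambda>n. (\<tau> ^^ n) y) ` {Suc 0..})"
    using w unfolding omega_limit_def by blast
  then obtain m where "m \<ge> Suc 0" "dist ((\<tau> ^^ m) y) w < d"
    using d(1) unfolding closure_approachable by auto
  then obtain n where "dist ((\<tau> ^^ Suc n) y) w < d"
    by (cases m) auto
  then have "dist (\<sigma> ((\<tau> ^^ Suc n) y)) (\<sigma> w) < e"
    using d(2)[OF orbit] by blast
  then have "dist (\<sigma> w) ((\<tau> ^^ n) y) < e"
    using homeomorphism_apply2[OF hom orbit[of n]] by (simp add: dist_commute)
  then have "eps_chain X \<sigma> e w ((\<tau> ^^ n) y)"
    by (rule eps_chain_step[OF wX orbit])
  moreover have "eps_chain X \<sigma> e ((\<tau> ^^ n) y) y"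
    using eps_chain_funpow[OF X(1) orbit \<open>e > 0\<close>, of n n]
      funpow_homeomorphism_cancel[OF hom \<open>y \<in> X\<close>] by simp
  ultimately show ?thesis
    by (rule eps_chain_trans)
qed

lemma Inter_closed_chain_nonempty:
  assumes "compact X" and "\<C> \<noteq> {}"
    and "\<And>S. S \<in> \<C> \<Longrightarrow> S \<noteq> {} \<and> closed S \<and> S \<subseteq> X"
    and "\<And>S T. S \<in> \<C> \<Longrightarrow> T \<in> \<C> \<Longrightarrow> S \<subseteq> T \<or> T \<subseteq> S"
  shows "\<Inter>\<C> \<noteq> {}"
proof -
  have "X \<inter> \<Inter>\<C> \<noteq> {}"
  proof (rule compact_imp_fip[OF assms(1)])
    fix \<F> assume \<F>: "finite \<F>" "\<F> \<subseteq> \<C>"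
    show "X \<inter> \<Inter>\<F> \<noteq> {}"
    proof (cases "\<F> = {}")
      case True
      then show ?thesis using assms(2,3) by auto
    next
      case False
      have "subset.chain \<C> \<F>"
        using \<F>(2) assms(4) unfolding subset_chain_def by blast
      then have "\<Inter>\<F> \<in> \<F>"
        using Inter_in_chain \<F>(1) False by blast
      then show ?thesis
        using \<F>(2) assms(3) by blast
    qed
  qed (use assms(3) in blast)
  then show ?thesis by blast
qed

lemma invariant_set_Inter:
  assumes "homeomorphism X X \<sigma> \<tau>" and "\<C> \<noteq> {}" and "\<And>S. S \<in> \<C> \<Longrightarrow> invariant_set X \<sigma> S"
  shows "invariant_set X \<sigma> (\<Inter>\<C>)"
proof -
  have "inj_on \<sigma> X"
    using homeomorphism_apply1[OF assms(1)] by (metis inj_onI)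
  moreover have "\<And>S. S \<in> \<C> \<Longrightarrow> S \<subseteq> X" and inv: "\<And>S. S \<in> \<C> \<Longrightarrow> \<sigma> ` S = S"
    using assms(3) unfolding invariant_set_def by auto
  moreover obtain S where "S \<in> \<C>"
    using assms(2) by blast
  ultimately have "\<sigma> ` \<Inter>(id ` \<C>) = (\<Inter>S\<in>\<C>. \<sigma> ` id S)"
    by (intro image_INT) auto
  then have "\<sigma> ` \<Inter>\<C> = \<Inter>\<C>"
    using inv by simp
  then show ?thesis
    using assms(2,3) unfolding invariant_set_def by blast
qed

lemma minimal_set_exists:
  assumes "compact X" and hom: "homeomorphism X X \<sigma> \<tau>"
    and "T \<noteq> {}" and "closed T" and "invariant_set X \<sigma> T"
  shows "\<exists>M. minimal_set X \<sigma> M \<and> M \<subseteq> T"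
proof -
  define \<A> where "\<A> = {S. S \<noteq> {} \<and> closed S \<and> invariant_set X \<sigma> S \<and> S \<subseteq> T}"
  have "\<exists>M\<in>\<A>. \<forall>S\<in>\<A>. S \<subseteq> M \<longrightarrow> S = M"
  proof (rule predicate_Zorn)
    show "partial_order_on \<A> (relation_of (\<lambda>S S'. S' \<subseteq> S) \<A>)"
      unfolding partial_order_on_def preorder_on_def refl_on_def trans_on_def antisym_on_def
        relation_of_def by auto
  next
    fix \<C> assume "\<C> \<in> Chains (relation_of (\<lambda>S S'. S' \<subseteq> S) \<A>)"
    then have \<C>: "\<C> \<subseteq> \<A>" "\<And>S S'. S \<in> \<C> \<Longrightarrow> S' \<in> \<C> \<Longrightarrow> S \<subseteq> S' \<or> S' \<subseteq> S"
      unfolding Chains_def relation_of_def by auto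
    show "\<exists>U\<in>\<A>. \<forall>S\<in>\<C>. U \<subseteq> S"
    proof (cases "\<C> = {}")
      case True
      then show ?thesis using assms(3-5) unfolding \<A>_def by auto
    next
      case False
      have "\<Inter>\<C> \<noteq> {}"
        using \<C> False assms(1) by (intro Inter_closed_chain_nonempty) (auto simp: \<A>_def invariant_set_def)
      moreover have "invariant_set X \<sigma> (\<Inter>\<C>)"
        using \<C> False hom by (intro invariant_set_Inter) (auto simp: \<A>_def)
      moreover have "\<Inter>\<C> \<subseteq> T"
        using \<C> False unfolding \<A>_def by blast
      moreover have "closed (\<Inter>\<C>)"
        using \<C> by (intro closed_Inter) (auto simp: \<A>_def)
      ultimately have "\<Inter>\<C> \<in> \<A>"
        unfolding \<A>_def by simp
      then show ?thesis by blast
    qed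
  qed
  then obtain M where M: "M \<in> \<A>" and max: "\<And>S. S \<in> \<A> \<Longrightarrow> S \<subseteq> M \<Longrightarrow> S = M"
    by blast
  have "minimal_set X \<sigma> M"
    unfolding minimal_set_def
  proof (intro conjI allI impI)
    fix S assume "S \<noteq> {} \<and> S \<subseteq> M \<and> closed S \<and> invariant_set X \<sigma> S"
    then show "S = M"
      using M by (intro max) (auto simp: \<A>_def)
  qed (use M in \<open>auto simp: \<A>_def\<close>)
  then show ?thesis
    using M unfolding \<A>_def by blast
qed

lemma chain_basin_eq_if_chain_transitive:
  assumes "chain_transitive X \<sigma>" and "Y \<noteq> {}" and "Y \<subseteq> X"
  shows "chain_basin X \<sigma> Y = X"
  using assms unfolding chain_basin_def chain_transitive_def by blast

lemma chain_transitive_if_minimal_basins: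
  fixes X :: "'a::metric_space set"
  assumes "compact X" and hom: "homeomorphism X X \<sigma> \<tau>"
    and basins: "\<And>M. minimal_set X \<sigma> M \<Longrightarrow> chain_basin X \<sigma> M = X"
  shows "chain_transitive X \<sigma>"
  unfolding chain_transitive_def
proof (intro ballI allI impI)
  fix x y and e :: real
  assume "x \<in> X" "y \<in> X" "e > 0"
  have "closed X"
    using \<open>compact X\<close> by (rule compact_imp_closed)
  have "\<tau> ` X \<subseteq> X"
    using hom by (simp add: homeomorphism_def)
  have "omega_limit \<tau> y \<noteq> {}"
    using \<open>compact X\<close> \<open>\<tau> ` X \<subseteq> X\<close> \<open>y \<in> X\<close> by (rule omega_limit_nonempty)
  moreover have "invariant_set X \<sigma> (omega_limit \<tau> y)"
    using \<open>compact X\<close> hom \<open>y \<in> X\<close> by (rule invariant_set_omega_limit_inverse)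
  ultimately obtain M where M: "minimal_set X \<sigma> M" "M \<subseteq> omega_limit \<tau> y"
    using minimal_set_exists[OF \<open>compact X\<close> hom _ closed_omega_limit] by blast
  obtain z where "z \<in> M" and x_to_z: "eps_chain X \<sigma> e x z"
    using basins[OF M(1)] \<open>x \<in> X\<close> \<open>e > 0\<close> unfolding chain_basin_def by blast
  then have "eps_chain X \<sigma> e z y"
    using eps_chain_from_omega_limit_inverse[OF hom \<open>y \<in> X\<close> \<open>closed X\<close> _ \<open>e > 0\<close>] M(2) \<open>z \<in> M\<close>
    by blast
  with x_to_z show "eps_chain X \<sigma> e x y"
    by (rule eps_chain_trans)
qed

theorem theorem10p15:
  fixes X :: "'a::metric_space set" and \<sigma> :: "'a \<Rightarrow> 'a"
    and Y :: "nat \<Rightarrow> 'a set" and k :: nat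
  assumes "cantor_set X"
    and "\<exists>\<tau>. homeomorphism X X \<sigma> \<tau>"
    and "aperiodic X \<sigma>"
    and "{S. minimal_set X \<sigma> S} = Y ` {1..k}"
  shows "chain_transitive X \<sigma> \<longleftrightarrow> (\<forall>i\<in>{1..k}. chain_basin X \<sigma> (Y i) = X)"
proof
  assume "chain_transitive X \<sigma>"
  moreover have "Y i \<noteq> {} \<and> Y i \<subseteq> X" if "i \<in> {1..k}" for i
  proof -
    have "minimal_set X \<sigma> (Y i)"
      using assms(4) that by blast
    then show ?thesis
      unfolding minimal_set_def invariant_set_def by blast
  qed
  ultimately show "\<forall>i\<in>{1..k}. chain_basin X \<sigma> (Y i) = X"
    by (simp add: chain_basin_eq_if_chain_transitive)
next
  assume "\<forall>i\<in>{1..k}. chain_basin X \<sigma> (Y i) = X"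
  moreover have "M \<in> Y ` {1..k}" if "minimal_set X \<sigma> M" for M
    using assms(4) that by blast
  ultimately have "chain_basin X \<sigma> M = X" if "minimal_set X \<sigma> M" for M
    using that by blast
  moreover obtain \<tau> where "homeomorphism X X \<sigma> \<tau>"
    using assms(2) by blast
  moreover have "compact X"
    using assms(1) unfolding cantor_set_def by blast
  ultimately show "chain_transitive X \<sigma>"
    by (intro chain_transitive_if_minimal_basins)
qed

end
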